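(* Let $V\in\mathcal C(S^1)$ be odd and let $f\ge0$ be a ($\mathcal C^1$) solution of (TP) with $D=0$ that is time-periodic, i.e. $f(T,\cdot)=f(0,\cdot)$ for some $T>0$ (and $f(t+T,\cdot)=f(t,\cdot)$). Then $f$ is a stationary solution.
   Context: $S^1=\mathbb R/\mathbb Z$; $(V*f)(\theta)=\int_{S^1}V(\theta-\psi)f(\psi)d\psi$. Equation (TP) with $D=0$: $\partial_tf=\partial_\theta((V*f)f)$. *)

theory Defs
  imports "HOL-Analysis.Analysis"
begin

text \<open>Functions on S^1 = R/Z are represented as 1-periodic functions on R.
  Convolution on S^1: (V * g)(theta) = integral over one period of V(theta - psi) g(psi).\<close>

definition circ_conv :: "(real \<Rightarrow> real) \<Rightarrow> (real \<Rightarrow> real) \<Rightarrow> real \<Rightarrow> real" where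
  "circ_conv V g \<theta> = integral {0..1} (\<lambda>\<psi>. V (\<theta> - \<psi>) * g \<psi>)"

end

theory Submission
  imports Defs "HOL-Library.Periodic_Fun"
begin

(* Let W be a primitive of V; since V is odd and 1-periodic, W is even and 1-periodic.
   The interaction energy  E(t) = \<integral>\<integral>_[0,1]^2 W(x - y) f(t,x) f(t,y)  is a Lyapunov
   functional: differentiating under the integral, using the symmetry of W and integrating
   by parts in x (all boundary terms cancel by periodicity) gives
       E'(t) = - 2 \<integral>_[0,1] c(t,x)^2 f(t,x) dx  \<le> 0.
   A nonincreasing T-periodic function is constant, hence E' = 0, so c^2 f = 0 and thus
   c f = 0 on [0,1], and by periodicity everywhere.  Then f_t = (c f)_x = 0, i.e. f is
   stationary. *)

text \<open>A function of (t, x) that is continuous in t and has a partial x-derivative which is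
  jointly continuous, is jointly continuous (the x-derivative gives a local Lipschitz bound).\<close>

lemma joint_continuity_from_partial_derivative:
  fixes f fx :: "real \<Rightarrow> real \<Rightarrow> real"
  assumes cont_t: "\<And>t x. t \<ge> 0 \<Longrightarrow> continuous (at t within {0..}) (\<lambda>s. f s x)"
    and deriv_x: "\<And>t x. t \<ge> 0 \<Longrightarrow> ((\<lambda>y. f t y) has_real_derivative fx t x) (at x)"
    and cont_fx: "continuous_on ({0..} \<times> UNIV) (\<lambda>(t, x). fx t x)"
  shows "continuous_on ({0..} \<times> UNIV) (\<lambda>(t, x). f t x)"
  unfolding continuous_on_iff
proof (intro ballI allI impI)
  fix p :: "real \<times> real" and e :: real
  assume p: "p \<in> {0..} \<times> UNIV" and e: "e > 0"
  obtain t0 x0 where p_eq: "p = (t0, x0)" by (cases p)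
  have t0: "t0 \<ge> 0" using p p_eq by auto
  define K where "K = {0..t0 + 1} \<times> {x0 - 1..x0 + 1}"
  have "compact ((\<lambda>(t, x). fx t x) ` K)"
    unfolding K_def
    by (intro compact_continuous_image compact_Times compact_Icc continuous_on_subset[OF cont_fx]) auto
  then obtain M where M: "M > 0" "\<forall>y\<in>(\<lambda>(t, x). fx t x) ` K. norm y \<le> M"
    using compact_imp_bounded bounded_pos by blast
  have fx_bound: "\<bar>fx t x\<bar> \<le> M" if "t \<in> {0..t0 + 1}" "x \<in> {x0 - 1..x0 + 1}" for t x
    using M(2) that unfolding K_def by force
  obtain d1 where d1: "d1 > 0" "\<forall>s\<in>{0..}. dist s t0 < d1 \<longrightarrow> dist (f s x0) (f t0 x0) < e / 2"
    using cont_t[OF t0, of x0] e unfolding continuous_within_eps_delta by (meson half_gt_zero)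
  define d where "d = min 1 (min d1 (e / (2 * M)))"
  show "\<exists>d>0. \<forall>q\<in>{0..} \<times> UNIV. dist q p < d \<longrightarrow>
          dist ((\<lambda>(t, x). f t x) q) ((\<lambda>(t, x). f t x) p) < e"
  proof (intro exI[of _ d] conjI ballI impI)
    show "d > 0" using d1 e M by (simp add: d_def)
    fix q assume q: "q \<in> {0..} \<times> UNIV" "dist q p < d"
    obtain t x where q_eq: "q = (t, x)" by (cases q)
    have dt: "\<bar>t - t0\<bar> < d" and dx: "\<bar>x - x0\<bar> < d"
      using q(2) dist_fst_le[of q p] dist_snd_le[of q p] by (auto simp: p_eq q_eq dist_real_def)
    have t: "t \<ge> 0" "t \<in> {0..t0 + 1}" using q(1) dt by (auto simp: q_eq d_def)
    have "\<bar>f t x - f t x0\<bar> \<le> M * \<bar>x - x0\<bar>"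
    proof (rule field_differentiable_bound[of "{x0 - 1..x0 + 1}" "\<lambda>y. f t y" "\<lambda>y. fx t y" M x x0,
          unfolded real_norm_def])
      show "((\<lambda>y. f t y) has_field_derivative fx t z) (at z within {x0 - 1..x0 + 1})" for z
        using deriv_x[OF t(1)] has_field_derivative_at_within by blast
    qed (use fx_bound[OF t(2)] dx in \<open>auto simp: d_def\<close>)
    also have "\<dots> \<le> M * (e / (2 * M))"
      using dx M by (intro mult_left_mono) (auto simp: d_def)
    also have "\<dots> = e / 2" using M by simp
    finally have space: "\<bar>f t x - f t x0\<bar> \<le> e / 2" .
    have time: "\<bar>f t x0 - f t0 x0\<bar> < e / 2"
      using d1 t dt by (auto simp: d_def dist_real_def)
    have "\<bar>f t x - f t0 x0\<bar> < e" using space time by arith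
    then show "dist ((\<lambda>(t, x). f t x) q) ((\<lambda>(t, x). f t x) p) < e"
      by (simp add: p_eq q_eq dist_real_def)
  qed
qed

lemma continuous_on_compose_half_space:
  fixes h :: "real \<Rightarrow> 'b::topological_space \<Rightarrow> 'c::topological_space"
  assumes h: "continuous_on ({0..} \<times> UNIV) (\<lambda>(t, x). h t x)"
    and a: "continuous_on S a" and b: "continuous_on S b" and nonneg: "\<forall>q\<in>S. a q \<ge> 0"
  shows "continuous_on S (\<lambda>q. h (a q) (b q))"
proof -
  have "continuous_on S (\<lambda>q. (\<lambda>(t, x). h t x) (a q, b q))"
    by (rule continuous_on_compose2[OF h]) (use a b nonneg in \<open>auto intro!: continuous_intros\<close>)
  then show ?thesis by simp
qed

lemma periodic_antimono_const:
  fixes E :: "real \<Rightarrow> 'a::order"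
  assumes antimono: "\<And>a b. 0 \<le> a \<Longrightarrow> a \<le> b \<Longrightarrow> E b \<le> E a"
    and T: "T > 0" and periodic: "\<And>t. t \<ge> 0 \<Longrightarrow> E (t + T) = E t"
    and t: "t \<ge> 0"
  shows "E t = E 0"
proof -
  have multiple: "E (real n * T) = E 0" for n
  proof (induction n)
    case (Suc n)
    have "E (real (Suc n) * T) = E (real n * T + T)" by (simp add: algebra_simps)
    also have "\<dots> = E (real n * T)" using T by (intro periodic) auto
    finally show ?case using Suc by simp
  qed simp
  obtain n where "t / T \<le> real n" using real_arch_simple by blast
  then have "t \<le> real n * T" using T by (simp add: field_simps)
  then have "E (real n * T) \<le> E t" using antimono t by blast
  moreover have "E t \<le> E 0" using antimono t by simp
  ultimately show ?thesis using multiple[of n] by simp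
qed

lemma periodic_vanishing:
  fixes g :: "real \<Rightarrow> 'a::zero"
  assumes periodic: "\<And>x. g (x + 1) = g x" and zero: "\<And>x. x \<in> {0..1} \<Longrightarrow> g x = 0"
  shows "g x = 0"
proof -
  interpret periodic_fun_simple' g by unfold_locales (rule periodic)
  have "g x = g (frac x + of_int \<lfloor>x\<rfloor>)" by (simp add: frac_def)
  also have "\<dots> = g (frac x)" by (rule plus_of_int)
  also have "\<dots> = 0" using frac_ge_0[of x] frac_lt_1[of x] by (intro zero) auto
  finally show ?thesis .
qed

locale odd_periodic_kernel =
  fixes V :: "real \<Rightarrow> real"
  assumes V_cont: "continuous_on UNIV V"
    and V_per: "\<forall>x. V (x + 1) = V x"
    and V_odd: "\<forall>x. V (- x) = - V x"
begin

text \<open>The potential W, a primitive of V on (-3,3); this interval contains every difference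
  of points of [0,1] and of (-1,2) that occurs below.\<close>

definition W :: "real \<Rightarrow> real" where "W x = integral {-3..x} V"

lemma W_deriv_within: "z \<in> {-3..3} \<Longrightarrow> (W has_real_derivative V z) (at z within {-3..3})"
  unfolding W_def[abs_def] by (rule integral_has_real_derivative[OF continuous_on_subset[OF V_cont]]) auto

lemma W_deriv: "z \<in> {-3<..<3} \<Longrightarrow> (W has_real_derivative V z) (at z)"
  using W_deriv_within[of z] at_within_interior[of z "{-3..3::real}"]
  by (simp add: interior_atLeastAtMost_real)

lemma W_cont: "continuous_on {-3..3} W"
  using W_deriv_within by (rule DERIV_continuous_on)

lemma W_compose_cont:
  assumes "continuous_on S u" "\<forall>q\<in>S. u q \<in> {-3..3}"
  shows "continuous_on S (\<lambda>q. W (u q))"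
  using continuous_on_compose2[OF W_cont assms(1)] assms(2) by (auto simp: image_subset_iff)

text \<open>W is even, since V is odd: (W(-z) - W(z))' = -V(-z) - V(z) = 0.\<close>

lemma W_even: "z \<in> {-1..1} \<Longrightarrow> W (- z) = W z"
proof -
  assume z: "z \<in> {-1..1}"
  have "((\<lambda>z. W (- z) - W z) has_real_derivative 0) (at y within {-1..1})" if "y \<in> {-1..1}" for y
  proof -
    have "((\<lambda>z. W (- z) - W z) has_real_derivative (V (- y) * (- 1) - V y)) (at y)"
      using that by (intro derivative_intros DERIV_chain2[of W, OF W_deriv] W_deriv) auto
    then show ?thesis using V_odd has_field_derivative_at_within by fastforce
  qed
  then obtain k where k: "\<forall>x\<in>{-1..1}. W (- x) - W x = k"
    using has_field_derivative_zero_constant[of "{-1..1}" "\<lambda>z. W (- z) - W z"] by auto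
  have "k = 0" using k[rule_format, of 0] by simp
  then show ?thesis using k z by auto
qed

text \<open>W is 1-periodic, since V is: W(z+1) - W(z) is constant, and zero at z = -1/2 by evenness.\<close>

lemma W_shift: "z \<in> {-1..0} \<Longrightarrow> W (z + 1) = W z"
proof -
  assume z: "z \<in> {-1..0}"
  have "((\<lambda>z. W (z + 1) - W z) has_real_derivative 0) (at y within {-1..0})" if "y \<in> {-1..0}" for y
  proof -
    have shifted: "(W has_real_derivative V (y + 1)) (at (y + 1))" using that by (intro W_deriv) auto
    have translation: "((\<lambda>x. x + 1) has_real_derivative 1) (at y)" by (auto intro!: derivative_eq_intros)
    have "((\<lambda>z. W (z + 1) - W z) has_real_derivative (V (y + 1) * 1 - V y)) (at y)"
      using that by (intro derivative_intros DERIV_chain2[OF shifted translation] W_deriv) auto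
    then show ?thesis using V_per has_field_derivative_at_within by fastforce
  qed
  then obtain k where k: "\<forall>x\<in>{-1..0}. W (x + 1) - W x = k"
    using has_field_derivative_zero_constant[of "{-1..0}" "\<lambda>z. W (z + 1) - W z"] by auto
  have "k = W (1 / 2) - W (- (1 / 2))" using k[rule_format, of "-1/2"] by simp
  also have "\<dots> = 0" using W_even[of "1/2"] by simp
  finally show ?thesis using k z by auto
qed

lemma conv_periodic: "circ_conv V g (x + 1) = circ_conv V g x"
  unfolding circ_conv_def
proof (rule integral_cong)
  fix y show "V (x + 1 - y) * g y = V (x - y) * g y"
    using V_per[rule_format, of "x - y"] by (simp add: algebra_simps)
qed

end

locale periodic_solution = odd_periodic_kernel V
  for V :: "real \<Rightarrow> real" +
  fixes f ft fx :: "real \<Rightarrow> real \<Rightarrow> real" and T :: real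
  assumes f_per: "\<forall>t\<ge>0. \<forall>\<theta>. f t (\<theta> + 1) = f t \<theta>"
    and f_nonneg: "\<forall>t\<ge>0. \<forall>\<theta>. f t \<theta> \<ge> 0"
    and ft_cont: "continuous_on ({0..} \<times> UNIV) (\<lambda>(t, \<theta>). ft t \<theta>)"
    and fx_cont: "continuous_on ({0..} \<times> UNIV) (\<lambda>(t, \<theta>). fx t \<theta>)"
    and ft_deriv: "\<forall>t\<ge>0. \<forall>\<theta>. ((\<lambda>s. f s \<theta>) has_real_derivative ft t \<theta>) (at t within {0..})"
    and fx_deriv: "\<forall>t\<ge>0. \<forall>\<theta>. ((\<lambda>\<phi>. f t \<phi>) has_real_derivative fx t \<theta>) (at \<theta>)"
    and equation: "\<forall>t\<ge>0. \<forall>\<theta>. ((\<lambda>\<phi>. circ_conv V (f t) \<phi> * f t \<phi>) has_real_derivative ft t \<theta>) (at \<theta>)"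
    and T_pos: "T > 0"
    and f_tper: "\<forall>t\<ge>0. \<forall>\<theta>. f (t + T) \<theta> = f t \<theta>"
begin

abbreviation c :: "real \<Rightarrow> real \<Rightarrow> real" where "c t \<equiv> circ_conv V (f t)"

text \<open>f and f_t are jointly continuous; this is what makes all integrands below continuous,
  hence integrable, and justifies differentiation under the integral sign.\<close>

lemma f_joint_cont: "continuous_on ({0..} \<times> UNIV) (\<lambda>(t, x). f t x)"
proof (rule joint_continuity_from_partial_derivative[OF _ _ fx_cont])
  show "continuous (at t within {0..}) (\<lambda>s. f s x)" if "t \<ge> 0" for t x
    using ft_deriv that DERIV_continuous by blast
qed (use fx_deriv in auto)

lemma f_compose_cont:
  "continuous_on S a \<Longrightarrow> continuous_on S b \<Longrightarrow> \<forall>q\<in>S. a q \<ge> 0 \<Longrightarrow> continuous_on S (\<lambda>q. f (a q) (b q))"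
  using continuous_on_compose_half_space[OF f_joint_cont] by blast

lemma ft_compose_cont:
  "continuous_on S a \<Longrightarrow> continuous_on S b \<Longrightarrow> \<forall>q\<in>S. a q \<ge> 0 \<Longrightarrow> continuous_on S (\<lambda>q. ft (a q) (b q))"
  using continuous_on_compose_half_space[OF ft_cont] by blast

lemma diff_in_range: "p \<in> cbox (0::real, 0::real) (1, 1) \<Longrightarrow> fst p - snd p \<in> {-3..3}"
  by (cases p) (auto simp: cbox_Pair_iff)

definition E :: "real \<Rightarrow> real" where
  "E t = integral (cbox (0, 0) (1, 1)) (\<lambda>(x, y). W (x - y) * (f t x * f t y))"

definition D :: "real \<Rightarrow> real" where
  "D t = integral (cbox (0, 0) (1, 1)) (\<lambda>(x, y). W (x - y) * (ft t x * f t y + f t x * ft t y))"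

lemma E_deriv:
  assumes t: "t \<ge> 0"
  shows "(E has_real_derivative D t) (at t within {0..})"
  unfolding E_def[abs_def] D_def
proof (rule leibniz_rule_field_derivative)
  show "((\<lambda>t. case p of (x, y) \<Rightarrow> W (x - y) * (f t x * f t y)) has_field_derivative
         (case p of (x, y) \<Rightarrow> W (x - y) * (ft s x * f s y + f s x * ft s y))) (at s within {0..})"
    if "s \<in> {0..}" for s p
    using ft_deriv that by (cases p) (auto intro!: derivative_eq_intros)
  show "(\<lambda>(x, y). W (x - y) * (f s x * f s y)) integrable_on cbox (0, 0) (1, 1)" if "s \<in> {0..}" for s
  proof (rule integrable_continuous)
    have "continuous_on (cbox (0, 0) (1, 1)) (\<lambda>p. W (fst p - snd p) * (f s (fst p) * f s (snd p)))"
      using that diff_in_range by (intro continuous_intros W_compose_cont f_compose_cont) auto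
    then show "continuous_on (cbox (0, 0) (1, 1)) (\<lambda>(x, y). W (x - y) * (f s x * f s y))"
      by (simp add: case_prod_beta)
  qed
  have "continuous_on ({0..} \<times> cbox (0, 0) (1, 1))
     (\<lambda>q. W (fst (snd q) - snd (snd q)) * (ft (fst q) (fst (snd q)) * f (fst q) (snd (snd q))
          + f (fst q) (fst (snd q)) * ft (fst q) (snd (snd q))))"
    using diff_in_range by (intro continuous_intros W_compose_cont f_compose_cont ft_compose_cont) auto
  then show "continuous_on ({0..} \<times> cbox (0, 0) (1, 1))
     (\<lambda>(s, p). case p of (x, y) \<Rightarrow> W (x - y) * (ft s x * f s y + f s x * ft s y))"
    by (simp add: case_prod_beta)
qed (use t in auto)

definition H :: "real \<Rightarrow> real \<Rightarrow> real" where
  "H t x = integral {0..1} (\<lambda>y. W (x - y) * f t y)"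

lemma D_integrands_cont:
  assumes t: "t \<ge> 0"
  shows "continuous_on (cbox (0, 0) (1, 1)) (\<lambda>(x, y). W (x - y) * (ft t x * f t y))"
    and "continuous_on (cbox (0, 0) (1, 1)) (\<lambda>(x, y). W (x - y) * (f t x * ft t y))"
proof -
  have "continuous_on (cbox (0, 0) (1, 1)) (\<lambda>p. W (fst p - snd p) * (ft t (fst p) * f t (snd p)))"
    and "continuous_on (cbox (0, 0) (1, 1)) (\<lambda>p. W (fst p - snd p) * (f t (fst p) * ft t (snd p)))"
    using t diff_in_range by (intro continuous_intros W_compose_cont f_compose_cont ft_compose_cont; auto)+
  then show "continuous_on (cbox (0, 0) (1, 1)) (\<lambda>(x, y). W (x - y) * (ft t x * f t y))"
    and "continuous_on (cbox (0, 0) (1, 1)) (\<lambda>(x, y). W (x - y) * (f t x * ft t y))"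
    by (simp_all add: case_prod_beta)
qed

text \<open>By the evenness of W the two terms of D coincide (swap x and y), so
  D(t) = 2 \<integral> f_t(t,x) H(t,x) dx.\<close>

lemma D_eq:
  assumes t: "t \<ge> 0"
  shows "D t = 2 * integral {0..1} (\<lambda>x. ft t x * H t x)"
proof -
  let ?S = "cbox (0::real, 0::real) (1, 1)"
  let ?k1 = "\<lambda>(x, y). W (x - y) * (ft t x * f t y)"
  let ?k2 = "\<lambda>(x, y). W (x - y) * (f t x * ft t y)"
  have "D t = integral ?S (\<lambda>p. ?k1 p + ?k2 p)"
    unfolding D_def by (rule arg_cong[where f="integral ?S"]) (auto simp: algebra_simps)
  also have "\<dots> = integral ?S ?k1 + integral ?S ?k2"
    using D_integrands_cont[OF t] by (intro integral_add integrable_continuous)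
  also have "integral ?S ?k2 = integral ?S (\<lambda>(x, y). W (y - x) * (f t y * ft t x))"
    using integral_swap_2dim[of 0 0 1 1 "\<lambda>x y. W (x - y) * (f t x * ft t y)"] D_integrands_cont(2)[OF t]
    by simp
  also have "\<dots> = integral ?S ?k1"
  proof (rule integral_cong)
    fix p assume "p \<in> ?S"
    then have "W (snd p - fst p) = W (fst p - snd p)"
      using W_even[of "fst p - snd p"] by (cases p) (auto simp: cbox_Pair_iff)
    then show "(\<lambda>(x, y). W (y - x) * (f t y * ft t x)) p = ?k1 p" by (cases p) simp
  qed
  also have "integral ?S ?k1 = integral (cbox 0 1) (\<lambda>x. integral (cbox 0 1) (\<lambda>y. W (x - y) * (ft t x * f t y)))"
    using integral_prod_continuous[OF D_integrands_cont(1)[OF t]] by simp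
  also have "\<dots> = integral {0..1} (\<lambda>x. ft t x * H t x)"
    unfolding H_def box_real(2) by (subst integral_mult_right[symmetric]) (simp add: algebra_simps)
  finally show ?thesis by simp
qed

lemma conv_integrand_cont:
  assumes t: "t \<ge> 0"
  shows "continuous_on (U \<times> cbox 0 1) (\<lambda>(x, y). V (x - y) * f t y)"
proof -
  have "continuous_on (U \<times> cbox 0 1) (\<lambda>q. V (fst q - snd q) * f t (snd q))"
    using t by (intro continuous_intros continuous_on_compose2[OF V_cont] f_compose_cont) auto
  then show ?thesis by (simp add: case_prod_beta)
qed

lemma c_cont: "t \<ge> 0 \<Longrightarrow> continuous_on S (c t)"
  unfolding circ_conv_def[abs_def] box_real(2)[symmetric]
  by (rule integral_continuous_on_param[OF conv_integrand_cont])

lemma H_deriv: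
  assumes t: "t \<ge> 0" and x: "x \<in> {-1<..<2}"
  shows "(H t has_real_derivative c t x) (at x)"
proof -
  have "((\<lambda>x. integral (cbox 0 1) (\<lambda>y. W (x - y) * f t y)) has_real_derivative
          integral (cbox 0 1) (\<lambda>y. V (x - y) * f t y)) (at x within {-1<..<2})"
  proof (rule leibniz_rule_field_derivative)
    show "((\<lambda>x. W (x - y) * f t y) has_field_derivative V (z - y) * f t y) (at z within {-1<..<2})"
      if "z \<in> {-1<..<2}" "y \<in> cbox 0 1" for z y
    proof -
      have shifted: "(W has_real_derivative V (z - y)) (at (z - y))" using that by (intro W_deriv) auto
      have translation: "((\<lambda>x. x - y) has_real_derivative 1) (at z)" by (auto intro!: derivative_eq_intros)
      have "((\<lambda>x. W (x - y) * f t y) has_field_derivative V (z - y) * 1 * f t y) (at z)"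
        using DERIV_cmult_right[OF DERIV_chain2[OF shifted translation], of "f t y"] by simp
      then show ?thesis using has_field_derivative_at_within by fastforce
    qed
    show "(\<lambda>y. W (z - y) * f t y) integrable_on cbox 0 1" if "z \<in> {-1<..<2}" for z
      using t that by (intro integrable_continuous continuous_intros W_compose_cont f_compose_cont) auto
  qed (use x conv_integrand_cont[OF t] in auto)
  moreover have "at x within {-1<..<2} = at x" using x by (intro at_within_open) auto
  ultimately show ?thesis unfolding H_def[abs_def] circ_conv_def box_real(2) by simp
qed

lemma H_per: "H t 1 = H t 0"
  unfolding H_def
proof (rule integral_cong)
  fix y :: real assume "y \<in> {0..1}"
  then show "W (1 - y) * f t y = W (0 - y) * f t y"
    using W_shift[of "- y"] by (simp add: algebra_simps)
qed

text \<open>Integration by parts: since f_t = (c f)_x and H_x = c, with periodic boundary terms,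
  \<integral> c (c f) dx = - \<integral> f_t H dx.\<close>

lemma integration_by_parts_dissipation:
  assumes t: "t \<ge> 0"
  shows "integral {0..1} (\<lambda>x. c t x * (c t x * f t x)) = - integral {0..1} (\<lambda>x. ft t x * H t x)"
proof -
  define I where "I = integral {0..1} (\<lambda>x. H t x * ft t x)"
  have H_vderiv: "(H t has_vector_derivative c t x) (at x)" if "x \<in> {0..1}" for x
    using H_deriv[OF t, of x] that by (simp add: has_real_derivative_iff_has_vector_derivative)
  have flux_vderiv: "((\<lambda>x. c t x * f t x) has_vector_derivative ft t x) (at x)" for x
    using equation t by (simp add: has_real_derivative_iff_has_vector_derivative)
  have H_cont: "continuous_on {0..1} (H t)"
    by (rule DERIV_continuous_on[of _ _ "c t"]) (use H_deriv[OF t] has_field_derivative_at_within in force)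
  have flux_cont: "continuous_on {0..1} (\<lambda>x. c t x * f t x)"
    by (rule DERIV_continuous_on[of _ _ "ft t"]) (use equation t has_field_derivative_at_within in blast)
  have "continuous_on {0..1} (ft t)"
    using ft_compose_cont[of "{0..1}" "\<lambda>_. t" "\<lambda>x. x"] t by auto
  then have "((\<lambda>x. H t x * ft t x) has_integral I) {0..1}"
    unfolding I_def using H_cont by (intro integrable_integral integrable_continuous_real continuous_intros)
  moreover have "H t 1 * (c t 1 * f t 1) - H t 0 * (c t 0 * f t 0) - (- I) = I"
    using H_per[of t] conv_periodic[of "f t" 0] f_per[rule_format, of t 0] t by simp
  ultimately have "((\<lambda>x. H t x * ft t x) has_integral
        (H t 1 * (c t 1 * f t 1) - H t 0 * (c t 0 * f t 0) - (- I))) {0..1}" by simp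
  from integration_by_parts[OF bounded_bilinear_mult, of 0 1 "H t" "\<lambda>x. c t x * f t x" "c t" "ft t",
      OF _ H_cont flux_cont H_vderiv flux_vderiv this]
  have "((\<lambda>x. c t x * (c t x * f t x)) has_integral - I) {0..1}" by simp
  then show ?thesis unfolding I_def by (simp add: integral_unique mult.commute)
qed

definition P :: "real \<Rightarrow> real" where
  "P t = integral {0..1} (\<lambda>x. c t x * (c t x * f t x))"

lemma D_eq_dissipation: "t \<ge> 0 \<Longrightarrow> D t = - 2 * P t"
  using D_eq integration_by_parts_dissipation unfolding P_def by simp

lemma dissipation_integrand_nonneg: "t \<ge> 0 \<Longrightarrow> 0 \<le> c t x * (c t x * f t x)"
  using mult_nonneg_nonneg[OF zero_le_square[of "c t x"], of "f t x"] f_nonneg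
  by (simp add: mult.assoc)

lemma dissipation_integrand_cont: "t \<ge> 0 \<Longrightarrow> continuous_on {0..1} (\<lambda>x. c t x * (c t x * f t x))"
  using c_cont[of t "{0..1}"] f_compose_cont[of "{0..1}" "\<lambda>_. t" "\<lambda>x. x"] by (auto intro!: continuous_intros)

lemma dissipation_nonneg: "t \<ge> 0 \<Longrightarrow> P t \<ge> 0"
  unfolding P_def
  by (rule integral_nonneg[OF integrable_continuous_real[OF dissipation_integrand_cont]])
     (auto intro: dissipation_integrand_nonneg)

lemma E_deriv_open:
  assumes t: "t > 0"
  shows "(E has_real_derivative D t) (at t)"
proof -
  have "(E has_real_derivative D t) (at t within {0<..})"
    using E_deriv[of t] t by (rule_tac DERIV_subset) auto
  moreover have "at t within {0<..} = at t" using t by (intro at_within_open) auto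
  ultimately show ?thesis by simp
qed

lemma E_antimono:
  assumes a: "0 \<le> a" and ab: "a \<le> b"
  shows "E b \<le> E a"
proof (rule DERIV_nonpos_imp_decreasing_open[OF ab])
  fix x assume "a < x"
  then show "\<exists>y. DERIV E x :> y \<and> y \<le> 0"
    using a E_deriv_open[of x] D_eq_dissipation[of x] dissipation_nonneg[of x] by auto
next
  have "continuous_on {0..} E"
    using E_deriv by (intro DERIV_continuous_on) auto
  then show "continuous_on {a..b} E"
    by (rule continuous_on_subset) (use a in auto)
qed

lemma E_const: "t \<ge> 0 \<Longrightarrow> E t = E 0"
proof (rule periodic_antimono_const[OF E_antimono T_pos])
  fix s :: real assume "s \<ge> 0"
  then have "f (s + T) = f s" using f_tper by auto
  then show "E (s + T) = E s" by (simp add: E_def)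
qed

lemma dissipation_zero: "t > 0 \<Longrightarrow> P t = 0"
proof -
  assume t: "t > 0"
  have "((\<lambda>_. E 0) has_real_derivative D t) (at t)"
    by (rule has_field_derivative_transform_within_open[OF E_deriv_open[OF t], of "{0<..}"])
       (use t in \<open>auto intro!: E_const\<close>)
  then have "D t = 0" using DERIV_unique[OF _ DERIV_const] by blast
  then show ?thesis using D_eq_dissipation[of t] t by simp
qed

text \<open>Zero dissipation forces c^2 f = 0, hence the flux c f vanishes on [0,1] and, being
  1-periodic, everywhere.\<close>

lemma flux_zero: "t > 0 \<Longrightarrow> c t x * f t x = 0"
proof -
  assume t: "t > 0"
  have on_unit: "c t y * f t y = 0" if y: "y \<in> {0..1}" for y
  proof -
    have "c t y * (c t y * f t y) = 0"
    proof (rule has_integral_0_cbox_imp_0[of 0 1 "\<lambda>x. c t x * (c t x * f t x)" y])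
      show "continuous_on (cbox 0 1) (\<lambda>x. c t x * (c t x * f t x))"
        using dissipation_integrand_cont t by (simp add: box_real(2))
      show "0 \<le> c t x * (c t x * f t x)" for x
        using dissipation_integrand_nonneg t by simp
      have "((\<lambda>x. c t x * (c t x * f t x)) has_integral P t) {0..1}"
        unfolding P_def using integrable_continuous_real[OF dissipation_integrand_cont[of t]] t
        by (intro integrable_integral) simp
      then show "((\<lambda>x. c t x * (c t x * f t x)) has_integral 0) (cbox 0 1)"
        using dissipation_zero[OF t] by (simp add: box_real(2))
    qed (use y in \<open>auto simp: box_real\<close>)
    then show ?thesis by simp
  qed
  show ?thesis
  proof (rule periodic_vanishing[of "\<lambda>x. c t x * f t x", OF _ on_unit])
    show "c t (y + 1) * f t (y + 1) = c t y * f t y" for y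
      using conv_periodic[of "f t" y] f_per t by simp
  qed
qed

lemma ft_zero: "t > 0 \<Longrightarrow> ft t \<theta> = 0"
proof -
  assume t: "t > 0"
  have "((\<lambda>\<phi>. c t \<phi> * f t \<phi>) has_real_derivative ft t \<theta>) (at \<theta>)" using equation t by auto
  moreover have "(\<lambda>\<phi>. c t \<phi> * f t \<phi>) = (\<lambda>_. 0)" using flux_zero[OF t] by auto
  ultimately have "((\<lambda>_. 0) has_real_derivative ft t \<theta>) (at \<theta>)" by simp
  then show ?thesis using DERIV_unique[OF _ DERIV_const] by blast
qed

lemma stationary: "t \<ge> 0 \<Longrightarrow> f t \<theta> = f 0 \<theta>"
proof (cases "t = 0")
  case False
  assume "t \<ge> 0"
  then have t: "t > 0" using False by simp
  show ?thesis
  proof (rule DERIV_isconst_end[OF t])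
    show "continuous_on {0..t} (\<lambda>s. f s \<theta>)"
      by (rule continuous_on_subset[OF DERIV_continuous_on[of "{0..}" "\<lambda>s. f s \<theta>" "\<lambda>s. ft s \<theta>"]])
         (use ft_deriv in auto)
    fix s assume s: "0 < s" "s < t"
    have "((\<lambda>s. f s \<theta>) has_real_derivative ft s \<theta>) (at s within {0<..})"
      using DERIV_subset[OF ft_deriv[rule_format, of s \<theta>], of "{0<..}"] s by (simp add: subset_eq)
    moreover have "at s within {0<..} = at s" using s by (intro at_within_open) auto
    ultimately show "DERIV (\<lambda>s. f s \<theta>) s :> 0" using ft_zero[of s] s by simp
  qed
qed simp

end

theorem mainTheorem16:
  fixes V :: "real \<Rightarrow> real" and f :: "real \<Rightarrow> real \<Rightarrow> real" and T :: real
  assumes V_cont: "continuous_on UNIV V"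
    and V_per: "\<forall>x. V (x + 1) = V x"
    and V_odd: "\<forall>x. V (- x) = - V x"
    and f_per: "\<forall>t\<ge>0. \<forall>\<theta>. f t (\<theta> + 1) = f t \<theta>"
    and f_nonneg: "\<forall>t\<ge>0. \<forall>\<theta>. f t \<theta> \<ge> 0"
    and f_C1_TP: "\<exists>ft fx.
        continuous_on ({0..} \<times> UNIV) (\<lambda>(t, \<theta>). ft t \<theta>) \<and>
        continuous_on ({0..} \<times> UNIV) (\<lambda>(t, \<theta>). fx t \<theta>) \<and>
        (\<forall>t\<ge>0. \<forall>\<theta>. ((\<lambda>s. f s \<theta>) has_real_derivative ft t \<theta>) (at t within {0..})) \<and>
        (\<forall>t\<ge>0. \<forall>\<theta>. ((\<lambda>\<phi>. f t \<phi>) has_real_derivative fx t \<theta>) (at \<theta>)) \<and>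
        (\<forall>t\<ge>0. \<forall>\<theta>. ((\<lambda>\<phi>. circ_conv V (f t) \<phi> * f t \<phi>) has_real_derivative ft t \<theta>) (at \<theta>))"
    and T_pos: "T > 0"
    and f_tper: "\<forall>t\<ge>0. \<forall>\<theta>. f (t + T) \<theta> = f t \<theta>"
  shows "\<forall>t\<ge>0. \<forall>\<theta>. f t \<theta> = f 0 \<theta>"
proof -
  obtain ft fx where
    "continuous_on ({0..} \<times> UNIV) (\<lambda>(t, \<theta>). ft t \<theta>)"
    "continuous_on ({0..} \<times> UNIV) (\<lambda>(t, \<theta>). fx t \<theta>)"
    "\<forall>t\<ge>0. \<forall>\<theta>. ((\<lambda>s. f s \<theta>) has_real_derivative ft t \<theta>) (at t within {0..})"
    "\<forall>t\<ge>0. \<forall>\<theta>. ((\<lambda>\<phi>. f t \<phi>) has_real_derivative fx t \<theta>) (at \<theta>)"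
    "\<forall>t\<ge>0. \<forall>\<theta>. ((\<lambda>\<phi>. circ_conv V (f t) \<phi> * f t \<phi>) has_real_derivative ft t \<theta>) (at \<theta>)"
    using f_C1_TP by blast
  then interpret periodic_solution V f ft fx T
    using V_cont V_per V_odd f_per f_nonneg T_pos f_tper by unfold_locales auto
  show ?thesis using stationary by blast
qed

end
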